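(* Let $f$ be a $C^{1+\alpha}$ diffeomorphism of $M=\mathbb{R}^d/\mathbb{Z}^d$, $\Lambda$ an invariant set and $n$ a positive integer such that for every $x\in\Lambda$, $\Gamma_{o(x)}$ has a continuous inverse $\Upsilon_{o(x)}$ on $X_n$, and for a positive integer $m$ let $\Lambda^*_m=\{x\in\Lambda:\|\Upsilon_{o(x)}\|_n\le m\}$. Then there exists $\delta>0$ such that if $\mathbf{y}$ is a $\delta$-pseudoorbit with every $y_j$ in the $\delta$-neighborhood of $\Lambda^*_m$, then there is a continuous linear operator $\tilde\Theta$ on $X_n$ with $\|\tilde\Theta\Gamma_{\mathbf{y}}-I\|_n\le1/2$ and $\|\tilde\Theta\|_n\le md\sqrt d$.
   Context: Tangent spaces identified with $\mathbb{R}^d$; distances on $M$ written $|x-y|$. $o(x)=(f^k(x))_k$; for $\mathbf{x}\in M^{\mathbb{Z}}$, $(\Gamma_{\mathbf{x}}\eta)_k=\eta_k-Df(x_{k-1})\eta_{k-1}$. $\|\eta\|_n=\sup_k e^{-|k|/n}|\eta_k|$, $X_n=\{\|\eta\|_n<\infty\}$, with operator norm also denoted $\|\cdot\|_n$. $\mathbf{y}$ is a $\delta$-pseudoorbit if $|f(y_{k-1})-y_k|<\delta$ for all $k$. *)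

theory Defs
  imports "HOL-Analysis.Analysis"
begin

text \<open>The torus M = R^d / Z^d is represented by R^d (type real^'d), points being
representatives modulo the integer lattice Zd.\<close>

definition Zd :: "(real^'d) set" where
  "Zd = {v. \<forall>i. v $ i \<in> \<int>}"

definition tdist :: "real^'d \<Rightarrow> real^'d \<Rightarrow> real" where
  "tdist x y = infdist (x - y) Zd"

text \<open>A subset of M, represented by its (Zd-saturated) preimage in R^d.\<close>
definition torus_set :: "(real^'d) set \<Rightarrow> bool" where
  "torus_set S \<longleftrightarrow> (\<forall>x\<in>S. \<forall>k\<in>Zd. x + k \<in> S)"

text \<open>f (a lift to R^d) induces a C^{1+alpha} diffeomorphism of the torus, with derivative Df.\<close>
definition C1a_torus_diffeo ::
  "(real^'d \<Rightarrow> real^'d) \<Rightarrow> (real^'d \<Rightarrow> ((real^'d) \<Rightarrow>\<^sub>L (real^'d))) \<Rightarrow> bool" where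
  "C1a_torus_diffeo f Df \<longleftrightarrow>
     (\<forall>x k. k \<in> Zd \<longrightarrow> f (x + k) - f x \<in> Zd) \<and>
     (\<forall>x. (f has_derivative blinfun_apply (Df x)) (at x)) \<and>
     (\<exists>\<alpha> C. 0 < \<alpha> \<and> \<alpha> \<le> 1 \<and> (\<forall>x y. norm (Df x - Df y) \<le> C * tdist x y powr \<alpha>)) \<and>
     (\<exists>g Dg. (\<forall>x k. k \<in> Zd \<longrightarrow> g (x + k) - g x \<in> Zd) \<and>
        (\<forall>x. (g has_derivative blinfun_apply (Dg x)) (at x)) \<and> continuous_on UNIV Dg \<and>
        (\<forall>x. g (f x) - x \<in> Zd) \<and> (\<forall>y. f (g y) - y \<in> Zd))"

text \<open>Inverse of f on the torus (any representative).\<close>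
definition finv :: "(real^'d \<Rightarrow> real^'d) \<Rightarrow> real^'d \<Rightarrow> real^'d" where
  "finv f y = (SOME x. f x - y \<in> Zd)"

definition orbit :: "(real^'d \<Rightarrow> real^'d) \<Rightarrow> real^'d \<Rightarrow> int \<Rightarrow> real^'d" where
  "orbit f x k = (if 0 \<le> k then (f ^^ nat k) x else (finv f ^^ nat (- k)) x)"

definition Gamma :: "(real^'d \<Rightarrow> ((real^'d) \<Rightarrow>\<^sub>L (real^'d))) \<Rightarrow> (int \<Rightarrow> real^'d)
     \<Rightarrow> (int \<Rightarrow> real^'d) \<Rightarrow> (int \<Rightarrow> real^'d)" where
  "Gamma Df x \<eta> = (\<lambda>k. \<eta> k - Df (x (k - 1)) (\<eta> (k - 1)))"

definition Xn :: "nat \<Rightarrow> (int \<Rightarrow> real^'d) set" where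
  "Xn n = {\<eta>. bdd_above (range (\<lambda>k. exp (- \<bar>real_of_int k\<bar> / real n) * norm (\<eta> k)))}"

definition wnorm :: "nat \<Rightarrow> (int \<Rightarrow> real^'d) \<Rightarrow> real" where
  "wnorm n \<eta> = (SUP k. exp (- \<bar>real_of_int k\<bar> / real n) * norm (\<eta> k))"

definition bounded_op :: "nat \<Rightarrow> ((int \<Rightarrow> real^'d) \<Rightarrow> (int \<Rightarrow> real^'d)) \<Rightarrow> bool" where
  "bounded_op n T \<longleftrightarrow>
     (\<forall>\<eta>\<in>Xn n. T \<eta> \<in> Xn n) \<and>
     (\<forall>\<eta>\<in>Xn n. \<forall>\<zeta>\<in>Xn n. T (\<lambda>k. \<eta> k + \<zeta> k) = (\<lambda>k. T \<eta> k + T \<zeta> k)) \<and>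
     (\<forall>c. \<forall>\<eta>\<in>Xn n. T (\<lambda>k. c *\<^sub>R \<eta> k) = (\<lambda>k. c *\<^sub>R T \<eta> k)) \<and>
     (\<exists>C. \<forall>\<eta>\<in>Xn n. wnorm n (T \<eta>) \<le> C * wnorm n \<eta>)"

definition op_norm :: "nat \<Rightarrow> ((int \<Rightarrow> real^'d) \<Rightarrow> (int \<Rightarrow> real^'d)) \<Rightarrow> real" where
  "op_norm n T = Sup ((\<lambda>\<eta>. wnorm n (T \<eta>)) ` {\<eta> \<in> Xn n. wnorm n \<eta> \<le> 1})"

definition cont_inverse :: "nat \<Rightarrow> ((int \<Rightarrow> real^'d) \<Rightarrow> (int \<Rightarrow> real^'d))
     \<Rightarrow> ((int \<Rightarrow> real^'d) \<Rightarrow> (int \<Rightarrow> real^'d)) \<Rightarrow> bool" where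
  "cont_inverse n T U \<longleftrightarrow> (\<forall>\<eta>\<in>Xn n. T \<eta> \<in> Xn n) \<and> bounded_op n U \<and>
     (\<forall>\<eta>\<in>Xn n. U (T \<eta>) = \<eta> \<and> T (U \<eta>) = \<eta>)"

text \<open>Lambda*_m = {x in Lambda. ||Upsilon_{o(x)}||_n \<le> m} (the inverse is unique on X_n).\<close>
definition Lstar :: "(real^'d \<Rightarrow> real^'d) \<Rightarrow> (real^'d \<Rightarrow> ((real^'d) \<Rightarrow>\<^sub>L (real^'d)))
     \<Rightarrow> nat \<Rightarrow> nat \<Rightarrow> (real^'d) set \<Rightarrow> (real^'d) set" where
  "Lstar f Df n m \<Lambda> = {x \<in> \<Lambda>. \<exists>U. cont_inverse n (Gamma Df (orbit f x)) U \<and> op_norm n U \<le> real m}"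

definition pseudo_orbit :: "(real^'d \<Rightarrow> real^'d) \<Rightarrow> real \<Rightarrow> (int \<Rightarrow> real^'d) \<Rightarrow> bool" where
  "pseudo_orbit f \<delta> y \<longleftrightarrow> (\<forall>k. tdist (f (y (k - 1))) (y k) < \<delta>)"

end

theory Submission
  imports Defs
begin

(* For each time j pick z_j in Lambda*_m close to y_j, and let U_j be the inverse
   of Gamma along the orbit of z_j, of norm at most m.  The approximate inverse Theta is
   assembled entrywise: (Theta xi)_j is the time-0 entry of U_j applied to xi shifted
   by j.  By finite-time shadowing and Hoelder continuity of Df, the derivatives along
   the orbit of z_j are epsilon-close to those along y on a window [-K-1, K+1].  The part
   of the error supported in the window is O(epsilon); the part outside it contributes
   only O(1/K) at time 0, because U_j is "local": cutting U_j w off by a tent function of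
   width K changes Gamma of it only by terms of size 1/K. *)

lemma Zd_0: "0 \<in> Zd"
  by (simp add: Zd_def)

lemma Zd_add: "a \<in> Zd \<Longrightarrow> b \<in> Zd \<Longrightarrow> a + b \<in> Zd"
  by (simp add: Zd_def)

lemma Zd_diff: "a \<in> Zd \<Longrightarrow> b \<in> Zd \<Longrightarrow> a - b \<in> Zd"
  by (simp add: Zd_def)

lemma Zd_uminus: "a \<in> Zd \<Longrightarrow> - a \<in> Zd"
  by (simp add: Zd_def)

definition lattice_floor :: "real^'d \<Rightarrow> real^'d" where
  "lattice_floor v = (\<chi> i. of_int \<lfloor>v $ i\<rfloor>)"

lemma lattice_floor_Zd: "lattice_floor v \<in> Zd"
  by (simp add: lattice_floor_def Zd_def)

lemma norm_minus_lattice_floor: "norm (v - lattice_floor v) \<le> real CARD('d)"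
  for v :: "real^'d"
proof -
  have "norm (v - lattice_floor v) \<le> (\<Sum>i\<in>UNIV. \<bar>(v - lattice_floor v) $ i\<bar>)"
    by (rule norm_le_l1_cart)
  also have "\<dots> \<le> (\<Sum>i\<in>(UNIV::'d set). 1)"
    by (intro sum_mono) (simp add: lattice_floor_def; linarith)
  finally show ?thesis
    by simp
qed

lemma tdist_le: "k \<in> Zd \<Longrightarrow> tdist x y \<le> norm (x - y - k)"
  unfolding tdist_def using infdist_le[of k Zd "x - y"] by (simp add: dist_norm)

lemma tdist_nonneg: "0 \<le> tdist x y"
  by (simp add: tdist_def infdist_nonneg)

lemma tdist_less_iff: "tdist x y < e \<longleftrightarrow> (\<exists>k\<in>Zd. norm (x - y - k) < e)"
proof
  assume "tdist x y < e"
  moreover have ne: "Zd \<noteq> {}"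
    using Zd_0 by auto
  ultimately have "(INF k\<in>Zd. dist (x - y) k) < e"
    unfolding tdist_def infdist_notempty[OF ne] by simp
  then obtain k where "k \<in> Zd" "dist (x - y) k < e"
    using cINF_less_iff[of Zd "dist (x - y)" e] ne by auto
  then show "\<exists>k\<in>Zd. norm (x - y - k) < e"
    by (auto simp: dist_norm)
next
  assume "\<exists>k\<in>Zd. norm (x - y - k) < e"
  then show "tdist x y < e"
    using tdist_le by (meson le_less_trans)
qed

lemma tdist_sym: "tdist x y < e \<Longrightarrow> tdist y x < e"
proof -
  assume "tdist x y < e"
  then obtain k where "k \<in> Zd" "norm (x - y - k) < e"
    by (auto simp: tdist_less_iff)
  moreover have "norm (y - x - (- k)) = norm (x - y - k)"
    by (metis minus_diff_eq norm_minus_cancel diff_minus_eq_add add.commute diff_diff_eq2)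
  ultimately show ?thesis
    using Zd_uminus tdist_less_iff by metis
qed

lemma tdist_triangle: "tdist x y < a \<Longrightarrow> tdist y z < b \<Longrightarrow> tdist x z < a + b"
proof -
  assume "tdist x y < a" "tdist y z < b"
  then obtain k1 k2 where k: "k1 \<in> Zd" "norm (x - y - k1) < a" "k2 \<in> Zd" "norm (y - z - k2) < b"
    by (auto simp: tdist_less_iff)
  have "norm (x - z - (k1 + k2)) \<le> norm (x - y - k1) + norm (y - z - k2)"
    using norm_triangle_ineq[of "x - y - k1" "y - z - k2"] by (simp add: algebra_simps)
  then show ?thesis
    using k Zd_add tdist_less_iff[of x z "a + b"] by fastforce
qed

lemma tdist_shift: "tdist x y < e \<Longrightarrow> x' - x \<in> Zd \<Longrightarrow> y' - y \<in> Zd \<Longrightarrow> tdist x' y' < e"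
proof -
  assume "tdist x y < e" and h: "x' - x \<in> Zd" "y' - y \<in> Zd"
  then obtain k where k: "k \<in> Zd" "norm (x - y - k) < e"
    by (auto simp: tdist_less_iff)
  have "x' - y' - (k + (x' - x) - (y' - y)) = x - y - k"
    by (simp add: algebra_simps)
  then show ?thesis
    using k h Zd_add Zd_diff tdist_less_iff by metis
qed

lemma tdist_le_card: "tdist x y \<le> real CARD('d)" for x y :: "real^'d"
  using tdist_le[OF lattice_floor_Zd[of "x - y"], of x y] norm_minus_lattice_floor[of "x - y"] by linarith

definition torus_uc :: "(real^'d \<Rightarrow> real^'d) \<Rightarrow> bool" where
  "torus_uc h \<longleftrightarrow> (\<forall>\<epsilon>>0. \<exists>\<delta>>0. \<forall>a b. tdist a b < \<delta> \<longrightarrow> tdist (h a) (h b) < \<epsilon>)"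

text \<open>A continuous map of \<open>\<real>\<^sup>d\<close> commuting with lattice translations modulo the lattice
  is uniformly continuous on the torus: both arguments can be moved into a fixed compact
  ball, where Heine--Cantor applies.\<close>
lemma torus_uc_periodic:
  fixes h :: "real^'d \<Rightarrow> real^'d"
  assumes cont: "continuous_on UNIV h" and per: "\<forall>x k. k \<in> Zd \<longrightarrow> h (x + k) - h x \<in> Zd"
  shows "torus_uc h"
  unfolding torus_uc_def
proof (intro allI impI)
  fix \<epsilon> :: real assume "\<epsilon> > 0"
  let ?S = "cball (0::real^'d) (real CARD('d) + 1)"
  have "uniformly_continuous_on ?S h"
    by (rule compact_uniformly_continuous) (auto intro: continuous_on_subset[OF cont])
  then obtain d where d: "d > 0" "\<forall>x\<in>?S. \<forall>x'\<in>?S. dist x' x < d \<longrightarrow> dist (h x') (h x) < \<epsilon>"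
    using \<open>\<epsilon> > 0\<close> unfolding uniformly_continuous_on_def by metis
  have "tdist (h a) (h b) < \<epsilon>" if ab: "tdist a b < min d 1" for a b
  proof -
    obtain k where k: "k \<in> Zd" "norm (a - b - k) < min d 1"
      using ab unfolding tdist_less_iff by blast
    define a0 where "a0 = a - lattice_floor a"
    define b0 where "b0 = b + k - lattice_floor a"
    have na0: "norm a0 \<le> real CARD('d)"
      unfolding a0_def by (rule norm_minus_lattice_floor)
    have ab0: "a0 - b0 = a - b - k"
      unfolding a0_def b0_def by (simp add: algebra_simps)
    have "norm b0 \<le> norm a0 + norm (a0 - b0)"
      using norm_triangle_ineq4[of a0 "a0 - b0"] by simp
    then have "a0 \<in> ?S" "b0 \<in> ?S" "dist a0 b0 < d"
      using na0 ab0 k by (auto simp: dist_norm)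
    then have "tdist (h a0) (h b0) < \<epsilon>"
      using d(2) tdist_le[OF Zd_0, of "h a0" "h b0"] by (fastforce simp: dist_norm)
    moreover have "h a - h a0 \<in> Zd"
      using per lattice_floor_Zd[of a] unfolding a0_def by (metis diff_add_cancel)
    moreover have "h b - h b0 \<in> Zd"
    proof -
      have "h (b + k) - h b \<in> Zd" "h (b + k) - h b0 \<in> Zd"
        using per k(1) lattice_floor_Zd[of a] unfolding b0_def by (metis diff_add_cancel)+
      then show ?thesis
        using Zd_diff by fastforce
    qed
    ultimately show ?thesis
      by (rule tdist_shift)
  qed
  then show "\<exists>\<delta>>0. \<forall>a b. tdist a b < \<delta> \<longrightarrow> tdist (h a) (h b) < \<epsilon>"
    using d(1) by (intro exI[of _ "min d 1"]) auto
qed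

lemma C1a_torus_uc:
  assumes "C1a_torus_diffeo f Df"
  shows "torus_uc f"
proof (rule torus_uc_periodic)
  have "\<forall>x. (f has_derivative blinfun_apply (Df x)) (at x)"
    using assms unfolding C1a_torus_diffeo_def by blast
  then show "continuous_on UNIV f"
    using has_derivative_continuous by (blast intro: continuous_at_imp_continuous_on)
  show "\<forall>x k. k \<in> Zd \<longrightarrow> f (x + k) - f x \<in> Zd"
    using assms unfolding C1a_torus_diffeo_def by blast
qed

text \<open>The chosen representative \<open>finv f\<close> of the inverse map agrees modulo the lattice with
  the continuous inverse \<open>g\<close> from the definition; hence it is uniformly continuous on the
  torus and a left inverse of \<open>f\<close> modulo the lattice.\<close>
lemma C1a_finv:
  assumes "C1a_torus_diffeo f Df"
  shows "torus_uc (finv f)" and "finv f (f x) - x \<in> Zd"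
proof -
  obtain g Dg where g: "\<forall>x k. k \<in> Zd \<longrightarrow> g (x + k) - g x \<in> Zd"
      "\<forall>x. (g has_derivative blinfun_apply (Dg x)) (at x)"
      "\<forall>x. g (f x) - x \<in> Zd" "\<forall>y. f (g y) - y \<in> Zd"
    using assms unfolding C1a_torus_diffeo_def by blast
  have finv_g: "finv f a - g a \<in> Zd" for a
  proof -
    have "f (finv f a) - a \<in> Zd"
      unfolding finv_def by (rule someI[of _ "g a"]) (use g(4) in blast)
    then obtain k where k: "k \<in> Zd" "f (finv f a) = a + k"
      by (metis add.commute diff_add_cancel)
    have "(g (a + k) - g a) - (g (f (finv f a)) - finv f a) \<in> Zd"
      using g(1,3) k(1) Zd_diff by blast
    then show ?thesis
      using k(2) by simp
  qed
  have "continuous_on UNIV g"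
    using g(2) has_derivative_continuous by (blast intro: continuous_at_imp_continuous_on)
  then have uc_g: "torus_uc g"
    using torus_uc_periodic g(1) by blast
  show "torus_uc (finv f)"
    unfolding torus_uc_def
  proof (intro allI impI)
    fix \<epsilon> :: real assume "\<epsilon> > 0"
    then obtain \<delta> where "\<delta> > 0" "\<forall>a b. tdist a b < \<delta> \<longrightarrow> tdist (g a) (g b) < \<epsilon>"
      using uc_g unfolding torus_uc_def by blast
    then show "\<exists>\<delta>>0. \<forall>a b. tdist a b < \<delta> \<longrightarrow> tdist (finv f a) (finv f b) < \<epsilon>"
      using tdist_shift[OF _ finv_g finv_g] by blast
  qed
  have "(finv f (f x) - g (f x)) + (g (f x) - x) \<in> Zd"
    using finv_g g(3) Zd_add by blast
  then show "finv f (f x) - x \<in> Zd"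
    by simp
qed

lemma pseudo_orbit_mono: "pseudo_orbit f d y \<Longrightarrow> d \<le> e \<Longrightarrow> pseudo_orbit f e y"
  unfolding pseudo_orbit_def by (meson less_le_trans)

lemma iterate_shadowing:
  assumes uc: "torus_uc h"
  shows "\<forall>\<rho>>0. \<exists>\<delta>>0. \<forall>s z. (\<forall>i. tdist (h (s i)) (s (Suc i)) < \<delta>) \<and> tdist z (s 0) < \<delta> \<longrightarrow>
           (\<forall>i\<le>N. tdist ((h ^^ i) z) (s i) < \<rho>)"
proof (induction N)
  case 0
  show ?case
    by auto
next
  case (Suc N)
  show ?case
  proof (intro allI impI)
    fix \<rho> :: real assume "\<rho> > 0"
    obtain e where e: "e > 0" "\<forall>a b. tdist a b < e \<longrightarrow> tdist (h a) (h b) < \<rho>/2"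
      using uc \<open>\<rho> > 0\<close> unfolding torus_uc_def by (metis half_gt_zero)
    obtain d where d: "d > 0" "\<forall>s z. (\<forall>i. tdist (h (s i)) (s (Suc i)) < d) \<and> tdist z (s 0) < d \<longrightarrow>
           (\<forall>i\<le>N. tdist ((h ^^ i) z) (s i) < min \<rho> e)"
      using Suc[rule_format, of "min \<rho> e"] \<open>\<rho> > 0\<close> e(1) by auto
    have "\<forall>i\<le>Suc N. tdist ((h ^^ i) z) (s i) < \<rho>"
      if s: "\<forall>i. tdist (h (s i)) (s (Suc i)) < min d (\<rho>/2)" and z: "tdist z (s 0) < min d (\<rho>/2)"
      for s z
    proof -
      have IH: "\<forall>i\<le>N. tdist ((h ^^ i) z) (s i) < min \<rho> e"
        using d(2) s z by auto
      have "tdist (h ((h ^^ N) z)) (h (s N)) < \<rho>/2"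
        using IH e(2) by auto
      moreover have "tdist (h (s N)) (s (Suc N)) < \<rho>/2"
        using s by auto
      ultimately have "tdist (h ((h ^^ N) z)) (s (Suc N)) < \<rho>/2 + \<rho>/2"
        by (rule tdist_triangle)
      then show ?thesis
        using IH by (auto simp: le_Suc_eq)
    qed
    then show "\<exists>\<delta>>0. \<forall>s z. (\<forall>i. tdist (h (s i)) (s (Suc i)) < \<delta>) \<and> tdist z (s 0) < \<delta> \<longrightarrow>
           (\<forall>i\<le>Suc N. tdist ((h ^^ i) z) (s i) < \<rho>)"
      using d(1) \<open>\<rho> > 0\<close> by (intro exI[of _ "min d (\<rho>/2)"]) auto
  qed
qed

lemma pseudo_orbit_reverse:
  assumes "C1a_torus_diffeo f Df" "\<epsilon> > 0"
  shows "\<exists>\<delta>>0. \<forall>y. pseudo_orbit f \<delta> y \<longrightarrow> (\<forall>k. tdist (finv f (y k)) (y (k - 1)) < \<epsilon>)"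
proof -
  obtain \<delta> where \<delta>: "\<delta> > 0" "\<forall>a b. tdist a b < \<delta> \<longrightarrow> tdist (finv f a) (finv f b) < \<epsilon>"
    using C1a_finv(1)[OF assms(1)] assms(2) unfolding torus_uc_def by blast
  have "tdist (finv f (y k)) (y (k - 1)) < \<epsilon>" if "pseudo_orbit f \<delta> y" for y k
  proof -
    have "tdist (y k) (f (y (k - 1))) < \<delta>"
      using that tdist_sym unfolding pseudo_orbit_def by blast
    then have "tdist (finv f (y k)) (finv f (f (y (k - 1)))) < \<epsilon>"
      using \<delta>(2) by blast
    moreover have "y (k - 1) - finv f (f (y (k - 1))) \<in> Zd"
      using Zd_uminus[OF C1a_finv(2)[OF assms(1)]] by simp
    moreover have "finv f (y k) - finv f (y k) \<in> Zd"
      by (simp add: Zd_0)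
    ultimately show ?thesis
      using tdist_shift by blast
  qed
  then show ?thesis
    using \<delta>(1) by blast
qed

lemma orbit_shadowing:
  assumes C1: "C1a_torus_diffeo f Df" and "\<rho> > 0"
  shows "\<exists>\<delta>>0. \<forall>y j z. pseudo_orbit f \<delta> y \<and> tdist z (y j) < \<delta> \<longrightarrow>
           (\<forall>i. \<bar>i\<bar> \<le> int N \<longrightarrow> tdist (orbit f z i) (y (j + i)) < \<rho>)"
proof -
  obtain d1 where d1: "d1 > 0" "\<forall>s z. (\<forall>i. tdist (f (s i)) (s (Suc i)) < d1) \<and> tdist z (s 0) < d1
      \<longrightarrow> (\<forall>i\<le>N. tdist ((f ^^ i) z) (s i) < \<rho>)"
    using iterate_shadowing[OF C1a_torus_uc[OF C1]] \<open>\<rho> > 0\<close> by blast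
  obtain d2 where d2: "d2 > 0" "\<forall>s z. (\<forall>i. tdist (finv f (s i)) (s (Suc i)) < d2) \<and> tdist z (s 0) < d2
      \<longrightarrow> (\<forall>i\<le>N. tdist ((finv f ^^ i) z) (s i) < \<rho>)"
    using iterate_shadowing[OF C1a_finv(1)[OF C1]] \<open>\<rho> > 0\<close> by blast
  obtain d3 where d3: "d3 > 0" "\<forall>y. pseudo_orbit f d3 y \<longrightarrow> (\<forall>k. tdist (finv f (y k)) (y (k - 1)) < d2)"
    using pseudo_orbit_reverse[OF C1 d2(1)] by blast
  define \<delta> where "\<delta> = min d1 (min d2 d3)"
  have "tdist (orbit f z i) (y (j + i)) < \<rho>"
    if y: "pseudo_orbit f \<delta> y" and z: "tdist z (y j) < \<delta>" and i: "\<bar>i\<bar> \<le> int N" for y j z i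
  proof (cases "0 \<le> i")
    case True
    have "\<forall>k. tdist (f (y (j + int k))) (y (j + int (Suc k))) < d1"
    proof
      fix k
      have "tdist (f (y (j + int (Suc k) - 1))) (y (j + int (Suc k))) < \<delta>"
        using y unfolding pseudo_orbit_def by blast
      then show "tdist (f (y (j + int k))) (y (j + int (Suc k))) < d1"
        unfolding \<delta>_def by simp
    qed
    then have "\<forall>k\<le>N. tdist ((f ^^ k) z) (y (j + int k)) < \<rho>"
      using d1(2)[rule_format, of "\<lambda>k. y (j + int k)" z] z unfolding \<delta>_def by simp
    moreover have "nat i \<le> N"
      using i by simp
    ultimately have "tdist ((f ^^ nat i) z) (y (j + int (nat i))) < \<rho>"
      by blast
    then show ?thesis
      using True by (simp add: orbit_def)
  next
    case False
    have "pseudo_orbit f d3 y"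
      using pseudo_orbit_mono[OF y] unfolding \<delta>_def by simp
    then have "\<forall>k. tdist (finv f (y (j - int k))) (y (j - int k - 1)) < d2"
      using d3(2) by blast
    then have "\<forall>k. tdist (finv f (y (j - int k))) (y (j - int (Suc k))) < d2"
      by (simp add: diff_diff_eq add.commute)
    then have "\<forall>k\<le>N. tdist ((finv f ^^ k) z) (y (j - int k)) < \<rho>"
      using d2(2)[rule_format, of "\<lambda>k. y (j - int k)" z] z unfolding \<delta>_def by simp
    moreover have "nat (- i) \<le> N"
      using i by simp
    ultimately have "tdist ((finv f ^^ nat (- i)) z) (y (j - int (nat (- i)))) < \<rho>"
      by blast
    then show ?thesis
      using False by (simp add: orbit_def)
  qed
  moreover have "\<delta> > 0"
    using d1(1) d2(1) d3(1) unfolding \<delta>_def by simp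
  ultimately show ?thesis
    by blast
qed

definition Ew :: "nat \<Rightarrow> int \<Rightarrow> real" where
  "Ew n k = exp (\<bar>real_of_int k\<bar> / real n)"

lemma Ew_pos: "0 < Ew n k"
  by (simp add: Ew_def)

lemma Ew_0: "Ew n 0 = 1"
  by (simp add: Ew_def)

lemma Ew_add: "0 < n \<Longrightarrow> Ew n (a + b) \<le> Ew n a * Ew n b"
  unfolding Ew_def exp_add[symmetric]
  by (simp add: add_divide_distrib[symmetric] divide_right_mono abs_triangle_ineq)

lemma Ew_diff1: "0 < n \<Longrightarrow> Ew n (i - 1) \<le> Ew n i * Ew n 1"
  using Ew_add[of n i "-1"] by (simp add: Ew_def)

lemma norm_le_Ew_wnorm:
  fixes \<eta> :: "int \<Rightarrow> real^'d"
  assumes "\<eta> \<in> Xn n"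
  shows "norm (\<eta> k) \<le> Ew n k * wnorm n \<eta>"
proof -
  have "exp (- \<bar>real_of_int k\<bar> / real n) * norm (\<eta> k) \<le> wnorm n \<eta>"
    using assms unfolding Xn_def wnorm_def by (auto intro: cSUP_upper)
  then have "Ew n k * (exp (- \<bar>real_of_int k\<bar> / real n) * norm (\<eta> k)) \<le> Ew n k * wnorm n \<eta>"
    using Ew_pos by (simp add: mult_left_mono)
  then show ?thesis
    by (simp add: Ew_def mult.assoc[symmetric] exp_add[symmetric])
qed

lemma wnorm_nonneg:
  assumes "\<eta> \<in> Xn n"
  shows "0 \<le> wnorm n \<eta>"
proof -
  have "norm (\<eta> 0) \<le> wnorm n \<eta>"
    using norm_le_Ew_wnorm[OF assms, of 0] by (simp add: Ew_0)
  then show ?thesis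
    by (meson norm_ge_zero order_trans)
qed

lemma Xn_wnorm_leI:
  fixes \<eta> :: "int \<Rightarrow> real^'d"
  assumes "\<And>k. norm (\<eta> k) \<le> Ew n k * B"
  shows "\<eta> \<in> Xn n" and "wnorm n \<eta> \<le> B"
proof -
  have bound: "exp (- \<bar>real_of_int k\<bar> / real n) * norm (\<eta> k) \<le> B" for k
  proof -
    have "exp (- \<bar>real_of_int k\<bar> / real n) * norm (\<eta> k)
        \<le> exp (- \<bar>real_of_int k\<bar> / real n) * (Ew n k * B)"
      using assms[of k] by (simp add: mult_left_mono)
    also have "\<dots> = B"
      by (simp add: Ew_def mult.assoc[symmetric] exp_add[symmetric])
    finally show ?thesis .
  qed
  then show "\<eta> \<in> Xn n"
    unfolding Xn_def by (intro CollectI bdd_aboveI2[where M=B])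
  show "wnorm n \<eta> \<le> B"
    unfolding wnorm_def using bound by (auto intro: cSUP_least)
qed

lemma Xn_add:
  assumes "a \<in> Xn n" "b \<in> Xn n"
  shows "(\<lambda>k. a k + b k) \<in> Xn n"
proof (rule Xn_wnorm_leI(1))
  fix k
  have "norm (a k + b k) \<le> norm (a k) + norm (b k)"
    by (rule norm_triangle_ineq)
  also have "\<dots> \<le> Ew n k * wnorm n a + Ew n k * wnorm n b"
    by (intro add_mono norm_le_Ew_wnorm assms)
  finally show "norm (a k + b k) \<le> Ew n k * (wnorm n a + wnorm n b)"
    by (simp add: algebra_simps)
qed

lemma shift_Xn:
  assumes "\<eta> \<in> Xn n" "0 < n"
  shows "(\<lambda>i. \<eta> (i + j)) \<in> Xn n" and "wnorm n (\<lambda>i. \<eta> (i + j)) \<le> Ew n j * wnorm n \<eta>"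
proof -
  have "norm (\<eta> (i + j)) \<le> Ew n i * (Ew n j * wnorm n \<eta>)" for i
  proof -
    have "norm (\<eta> (i + j)) \<le> Ew n (i + j) * wnorm n \<eta>"
      by (rule norm_le_Ew_wnorm[OF assms(1)])
    also have "\<dots> \<le> (Ew n i * Ew n j) * wnorm n \<eta>"
      by (rule mult_right_mono[OF Ew_add[OF assms(2)] wnorm_nonneg[OF assms(1)]])
    finally show ?thesis
      by (simp add: mult.assoc)
  qed
  then show "(\<lambda>i. \<eta> (i + j)) \<in> Xn n" and "wnorm n (\<lambda>i. \<eta> (i + j)) \<le> Ew n j * wnorm n \<eta>"
    by (rule Xn_wnorm_leI)+
qed

lemma delayed_apply_Xn:
  assumes "e \<in> Xn n" "0 < n" and L: "\<And>i. norm (L i) \<le> c"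
  shows "(\<lambda>i. blinfun_apply (L i) (e (i - 1))) \<in> Xn n"
    and "wnorm n (\<lambda>i. blinfun_apply (L i) (e (i - 1))) \<le> c * Ew n 1 * wnorm n e"
proof -
  have "norm (blinfun_apply (L i) (e (i - 1))) \<le> Ew n i * (c * Ew n 1 * wnorm n e)" for i
  proof -
    have c0: "0 \<le> c"
      using L norm_ge_zero order_trans by blast
    have "norm (blinfun_apply (L i) (e (i - 1))) \<le> norm (L i) * norm (e (i - 1))"
      by (rule norm_blinfun)
    also have "\<dots> \<le> c * (Ew n (i - 1) * wnorm n e)"
      using L c0 norm_le_Ew_wnorm[OF assms(1)] by (intro mult_mono) auto
    also have "\<dots> \<le> c * ((Ew n i * Ew n 1) * wnorm n e)"
      using Ew_diff1[OF assms(2)] c0 wnorm_nonneg[OF assms(1)]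
      by (intro mult_left_mono mult_right_mono) auto
    finally show ?thesis
      by (simp add: algebra_simps)
  qed
  then show "(\<lambda>i. blinfun_apply (L i) (e (i - 1))) \<in> Xn n"
    and "wnorm n (\<lambda>i. blinfun_apply (L i) (e (i - 1))) \<le> c * Ew n 1 * wnorm n e"
    by (rule Xn_wnorm_leI)+
qed

lemma op_norm_leI:
  fixes T :: "(int \<Rightarrow> real^'d) \<Rightarrow> (int \<Rightarrow> real^'d)"
  assumes "\<And>\<eta>. \<eta> \<in> Xn n \<Longrightarrow> wnorm n \<eta> \<le> 1 \<Longrightarrow> wnorm n (T \<eta>) \<le> c"
  shows "op_norm n T \<le> c"
  unfolding op_norm_def
proof (rule cSup_least)
  have "norm ((\<lambda>k. 0 :: real^'d) k) \<le> Ew n k * 0" for k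
    by simp
  then have "(\<lambda>k. 0 :: real^'d) \<in> {\<eta> \<in> Xn n. wnorm n \<eta> \<le> 1}"
    using Xn_wnorm_leI[of "\<lambda>k. 0 :: real^'d" n 0] by fastforce
  then show "(\<lambda>\<eta>. wnorm n (T \<eta>)) ` {\<eta> \<in> Xn n. wnorm n \<eta> \<le> 1} \<noteq> {}"
    by blast
qed (use assms in auto)

lemma wnorm_op_le:
  fixes U :: "(int \<Rightarrow> real^'d) \<Rightarrow> (int \<Rightarrow> real^'d)"
  assumes U: "bounded_op n U" and opn: "op_norm n U \<le> M" and \<eta>: "\<eta> \<in> Xn n"
  shows "wnorm n (U \<eta>) \<le> M * wnorm n \<eta>"
proof -
  obtain C where C: "\<forall>\<zeta>\<in>Xn n. wnorm n (U \<zeta>) \<le> C * wnorm n \<zeta>"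
    using U unfolding bounded_op_def by blast
  have hom: "\<And>c \<zeta>. \<zeta> \<in> Xn n \<Longrightarrow> U (\<lambda>k. c *\<^sub>R \<zeta> k) = (\<lambda>k. c *\<^sub>R U \<zeta> k)"
    and UX: "\<And>\<zeta>. \<zeta> \<in> Xn n \<Longrightarrow> U \<zeta> \<in> Xn n"
    using U unfolding bounded_op_def by blast+
  have bdd: "bdd_above ((\<lambda>\<zeta>. wnorm n (U \<zeta>)) ` {\<zeta> \<in> Xn n. wnorm n \<zeta> \<le> 1})"
  proof (rule bdd_aboveI2)
    fix \<zeta> :: "int \<Rightarrow> real^'d" assume "\<zeta> \<in> {\<zeta> \<in> Xn n. wnorm n \<zeta> \<le> 1}"
    then have "\<zeta> \<in> Xn n" "0 \<le> wnorm n \<zeta>" "wnorm n \<zeta> \<le> 1"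
      using wnorm_nonneg[of \<zeta> n] by auto
    then have "\<zeta> \<in> Xn n" "C * wnorm n \<zeta> \<le> max C 0"
      by (auto simp: max_def mult_left_le mult_nonpos_nonneg)
    then show "wnorm n (U \<zeta>) \<le> max C 0"
      using C order_trans by blast
  qed
  define r where "r = wnorm n \<eta>"
  show ?thesis
  proof (cases "r = 0")
    case True
    then have "\<eta> = (\<lambda>k. 0 *\<^sub>R \<eta> k)"
      using norm_le_Ew_wnorm[OF \<eta>] unfolding r_def by (simp add: fun_eq_iff)
    then have "U \<eta> = (\<lambda>k. 0)"
      using hom[OF \<eta>, of 0] by simp
    then show ?thesis
      using Xn_wnorm_leI(2)[of "U \<eta>" n 0] True unfolding r_def by simp
  next
    case False
    then have r: "r > 0"
      using wnorm_nonneg[OF \<eta>] unfolding r_def by simp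
    define \<zeta> where "\<zeta> = (\<lambda>k. (1 / r) *\<^sub>R \<eta> k)"
    have "norm (\<zeta> k) \<le> Ew n k * 1" for k
      using norm_le_Ew_wnorm[OF \<eta>, of k] r unfolding \<zeta>_def r_def[symmetric] by (simp add: field_simps)
    then have \<zeta>: "\<zeta> \<in> Xn n" "wnorm n \<zeta> \<le> 1"
      by (rule Xn_wnorm_leI)+
    have "wnorm n (U \<zeta>) \<le> op_norm n U"
      unfolding op_norm_def by (rule cSup_upper) (use \<zeta> bdd in auto)
    then have "norm (U \<zeta> k) \<le> Ew n k * M" for k
      using norm_le_Ew_wnorm[OF UX[OF \<zeta>(1)], of k] opn Ew_pos[of n k]
      by (meson mult_left_mono order_trans less_imp_le)
    moreover have "U \<zeta> = (\<lambda>k. (1 / r) *\<^sub>R U \<eta> k)"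
      unfolding \<zeta>_def by (rule hom[OF \<eta>])
    ultimately have "norm (U \<eta> k) \<le> Ew n k * (M * r)" for k
      using r by (simp add: field_simps)
    then show ?thesis
      unfolding r_def by (rule Xn_wnorm_leI(2))
  qed
qed

lemma op_at_zero_le:
  fixes U :: "(int \<Rightarrow> real^'d) \<Rightarrow> (int \<Rightarrow> real^'d)"
  assumes "bounded_op n U" "op_norm n U \<le> M" "\<eta> \<in> Xn n"
  shows "norm (U \<eta> 0) \<le> M * wnorm n \<eta>"
proof -
  have "U \<eta> \<in> Xn n"
    using assms(1,3) unfolding bounded_op_def by blast
  then have "norm (U \<eta> 0) \<le> wnorm n (U \<eta>)"
    using norm_le_Ew_wnorm[of "U \<eta>" n 0] by (simp add: Ew_0)
  then show ?thesis
    using wnorm_op_le[OF assms] by linarith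
qed

text \<open>An elementary estimate turning the Hoelder bound into a bound on the torus, whose
  diameter is at most d.\<close>
lemma powr_le_1_plus:
  fixes t \<alpha> :: real
  assumes "0 \<le> t" "0 < \<alpha>" "\<alpha> \<le> 1"
  shows "t powr \<alpha> \<le> 1 + t"
proof (cases "t \<le> 1")
  case True
  then have "t powr \<alpha> \<le> 1 powr \<alpha>"
    using powr_mono2[of \<alpha> t 1] assms by simp
  then show ?thesis
    using assms(1) by simp
next
  case False
  then have "t powr \<alpha> \<le> t powr 1"
    using assms by (intro powr_mono) auto
  then show ?thesis
    using False by simp
qed

lemma Df_bounded:
  assumes "C1a_torus_diffeo f Df"
  shows "\<exists>B. \<forall>x. norm (Df x) \<le> B"
proof -
  obtain \<alpha> C where h: "0 < \<alpha>" "\<alpha> \<le> 1" "\<forall>x y. norm (Df x - Df y) \<le> C * tdist x y powr \<alpha>"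
    using assms unfolding C1a_torus_diffeo_def by blast
  have "norm (Df x) \<le> norm (Df 0) + \<bar>C\<bar> * (1 + real CARD('a))" for x :: "real^'a"
  proof -
    have "tdist x 0 powr \<alpha> \<le> 1 + real CARD('a)"
      using powr_le_1_plus[OF tdist_nonneg[of x 0] h(1,2)] tdist_le_card[of x 0] by linarith
    then have "C * tdist x 0 powr \<alpha> \<le> \<bar>C\<bar> * (1 + real CARD('a))"
      by (meson abs_ge_self abs_ge_zero mult_mono order_trans powr_ge_zero)
    moreover have "norm (Df x) \<le> norm (Df 0) + norm (Df x - Df 0)"
      using norm_triangle_ineq[of "Df 0" "Df x - Df 0"] by simp
    ultimately show ?thesis
      using h(3) by (meson add_left_mono order_trans)
  qed
  then show ?thesis
    by blast
qed

lemma Df_uniformly_close: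
  assumes "C1a_torus_diffeo f Df" "\<epsilon> > 0"
  shows "\<exists>\<rho>>0. \<forall>a b. tdist a b < \<rho> \<longrightarrow> norm (Df a - Df b) \<le> \<epsilon>"
proof -
  obtain \<alpha> C where h: "0 < \<alpha>" "\<alpha> \<le> 1" "\<forall>x y. norm (Df x - Df y) \<le> C * tdist x y powr \<alpha>"
    using assms(1) unfolding C1a_torus_diffeo_def by blast
  define q where "q = \<epsilon> / (\<bar>C\<bar> + 1)"
  have q: "q > 0" "\<bar>C\<bar> * q \<le> \<epsilon>"
    using assms(2) unfolding q_def by (auto simp: field_simps)
  have "norm (Df a - Df b) \<le> \<epsilon>" if "tdist a b < q powr (1 / \<alpha>)" for a b
  proof -
    have "tdist a b powr \<alpha> \<le> (q powr (1 / \<alpha>)) powr \<alpha>"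
      using that h(1) tdist_nonneg by (intro powr_mono2) auto
    then have "tdist a b powr \<alpha> \<le> q"
      using q(1) h(1) by (simp add: powr_powr)
    then have "C * tdist a b powr \<alpha> \<le> \<bar>C\<bar> * q"
      by (meson abs_ge_self abs_ge_zero mult_mono order_trans powr_ge_zero)
    then show ?thesis
      using h(3) q(2) by (meson order_trans)
  qed
  then show ?thesis
    using q(1) by (intro exI[of _ "q powr (1 / \<alpha>)"]) auto
qed

definition tent :: "nat \<Rightarrow> int \<Rightarrow> real" where
  "tent K i = max 0 (1 - \<bar>real_of_int i\<bar> / real K)"

lemma tent_range: "0 \<le> tent K i" "tent K i \<le> 1" "tent K 0 = 1"
  unfolding tent_def by auto

lemma tent_outside: "0 < K \<Longrightarrow> \<not> \<bar>i\<bar> \<le> int K \<Longrightarrow> tent K i = 0"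
  unfolding tent_def by (simp add: field_simps)

lemma tent_increment: "0 < K \<Longrightarrow> \<bar>tent K i - tent K (i - 1)\<bar> \<le> 1 / real K"
proof -
  assume "0 < K"
  have "\<bar>\<bar>real_of_int (i - 1)\<bar> - \<bar>real_of_int i\<bar>\<bar> \<le> 1"
    using abs_triangle_ineq3[of "real_of_int (i - 1)" "real_of_int i"] by simp
  then have "\<bar>(1 - \<bar>real_of_int i\<bar> / real K) - (1 - \<bar>real_of_int (i - 1)\<bar> / real K)\<bar> \<le> 1 / real K"
    using \<open>0 < K\<close> by (simp add: diff_divide_distrib[symmetric] divide_right_mono)
  then show ?thesis
    unfolding tent_def by linarith
qed

lemma Gamma_scaleR:
  "Gamma Df x (\<lambda>i. a i *\<^sub>R u i) k
     = a k *\<^sub>R Gamma Df x u k + blinfun_apply ((a k - a (k - 1)) *\<^sub>R Df (x (k - 1))) (u (k - 1))"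
  unfolding Gamma_def by (simp add: blinfun.scaleR_right blinfun.diff_left blinfun.scaleR_left scaleR_diff_left scaleR_diff_right)

text \<open>Indeed, cutting \<open>u = \<Upsilon>w\<close> off by the tent function
  gives \<open>\<Gamma>\<^sub>x(tent\<cdot>u) = c\<close> with \<open>c\<close> made of the small increments of the tent, so that
  \<open>(\<Upsilon>w)\<^sub>0 = u\<^sub>0 = (tent\<cdot>u)\<^sub>0 = (\<Upsilon>c)\<^sub>0\<close>.\<close>
lemma inverse_locality:
  fixes x :: "int \<Rightarrow> real^'d" and w :: "int \<Rightarrow> real^'d"
  assumes ci: "cont_inverse n (Gamma Df x) U" and opn: "op_norm n U \<le> M" and "0 \<le> M"
    and n: "0 < n" and K: "0 < K" and Bd: "\<forall>i. norm (Df (x i)) \<le> Bd"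
    and w: "w \<in> Xn n" and supp: "\<forall>i. \<bar>i\<bar> \<le> int K \<longrightarrow> w i = 0"
  shows "norm (U w 0) \<le> M * M * Bd * Ew n 1 / real K * wnorm n w"
proof -
  have U: "bounded_op n U" and UX: "\<And>\<zeta>. \<zeta> \<in> Xn n \<Longrightarrow> U \<zeta> \<in> Xn n"
    and inv: "\<And>\<zeta>. \<zeta> \<in> Xn n \<Longrightarrow> U (Gamma Df x \<zeta>) = \<zeta> \<and> Gamma Df x (U \<zeta>) = \<zeta>"
    using ci unfolding cont_inverse_def bounded_op_def by blast+
  define u where "u = U w"
  have u: "u \<in> Xn n" "wnorm n u \<le> M * wnorm n w" "Gamma Df x u = w"
    unfolding u_def using UX[OF w] wnorm_op_le[OF U opn w] inv[OF w] by auto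
  define v where "v = (\<lambda>i. tent K i *\<^sub>R u i)"
  define L where "L = (\<lambda>i. (tent K i - tent K (i - 1)) *\<^sub>R Df (x (i - 1)))"
  define c where "c = (\<lambda>i. blinfun_apply (L i) (u (i - 1)))"
  have "norm (v i) \<le> Ew n i * wnorm n u" for i
    using tent_range(1,2)[of K i] norm_le_Ew_wnorm[OF u(1), of i] unfolding v_def
    by (simp add: order_trans[OF mult_left_le_one_le])
  then have v: "v \<in> Xn n"
    by (rule Xn_wnorm_leI)
  have "norm (L i) \<le> 1 / real K * Bd" for i
    unfolding L_def using tent_increment[OF K, of i] Bd
    by (simp only: norm_scaleR) (intro mult_mono; simp)
  then have c: "c \<in> Xn n" "wnorm n c \<le> 1 / real K * Bd * Ew n 1 * wnorm n u"
    unfolding c_def using delayed_apply_Xn[OF u(1) n] by blast+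
  have "tent K i *\<^sub>R w i = 0" for i
    using supp tent_outside[OF K] by (cases "\<bar>i\<bar> \<le> int K") auto
  then have "Gamma Df x v = c"
    unfolding v_def c_def L_def by (simp add: fun_eq_iff Gamma_scaleR u(3))
  then have "U w 0 = U c 0"
    using inv[OF v] tent_range(3)[of K] unfolding u_def[symmetric] v_def by auto
  also have "norm (U c 0) \<le> M * wnorm n c"
    by (rule op_at_zero_le[OF U opn c(1)])
  also have "\<dots> \<le> M * (1 / real K * Bd * Ew n 1 * (M * wnorm n w))"
  proof -
    have "0 \<le> Bd"
      using Bd norm_ge_zero order_trans by blast
    then have "1 / real K * Bd * Ew n 1 * wnorm n u \<le> 1 / real K * Bd * Ew n 1 * (M * wnorm n w)"
      using u(2) Ew_pos[of n 1] by (intro mult_left_mono) auto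
    then show ?thesis
      using c(2) \<open>0 \<le> M\<close> by (intro mult_left_mono) auto
  qed
  finally show ?thesis
    by (simp add: field_simps)
qed

text \<open>Writing \<open>e\<close> for \<open>\<eta>\<close> shifted by \<open>j\<close>, the shifted \<open>\<Gamma>\<^sub>y\<eta>\<close> equals \<open>\<Gamma>\<^sub>xe + w\<^sub>1 + w\<^sub>2\<close> with
  \<open>w\<^sub>1\<close> small (the window part) and \<open>w\<^sub>2\<close> vanishing on the window; hence
  \<open>(\<Upsilon> (\<Gamma>\<^sub>y\<eta>)(\<cdot>+j))\<^sub>0\<close> differs from \<open>\<eta>\<^sub>j\<close> by \<open>O(\<epsilon> + 1/K)\<close>, by \<open>inverse_locality\<close>.\<close>
lemma local_inverse_estimate:
  fixes x y \<eta> :: "int \<Rightarrow> real^'d"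
  assumes ci: "cont_inverse n (Gamma Df x) U" and opn: "op_norm n U \<le> M" and M: "0 \<le> M"
    and n: "0 < n" and K: "0 < K" and Bd: "\<forall>z. norm (Df z) \<le> Bd"
    and close: "\<forall>i. \<bar>i\<bar> \<le> int K + 1 \<longrightarrow> norm (Df (x i) - Df (y (i + j))) \<le> \<epsilon>"
    and \<eta>: "\<eta> \<in> Xn n"
  shows "norm (U (\<lambda>i. Gamma Df y \<eta> (i + j)) 0 - \<eta> j)
          \<le> (M * \<epsilon> * Ew n 1 + 2 * M * M * Bd * Bd * (Ew n 1)\<^sup>2 / real K) * (Ew n j * wnorm n \<eta>)"
proof -
  have U: "bounded_op n U"
    and add: "\<And>a b. a \<in> Xn n \<Longrightarrow> b \<in> Xn n \<Longrightarrow> U (\<lambda>k. a k + b k) = (\<lambda>k. U a k + U b k)"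
    and GX: "\<And>\<zeta>. \<zeta> \<in> Xn n \<Longrightarrow> Gamma Df x \<zeta> \<in> Xn n"
    and inv: "\<And>\<zeta>. \<zeta> \<in> Xn n \<Longrightarrow> U (Gamma Df x \<zeta>) = \<zeta>"
    using ci unfolding cont_inverse_def bounded_op_def by blast+
  have "norm (Df (x 0) - Df (y (0 + j))) \<le> \<epsilon>"
    using close[rule_format, of 0] by simp
  then have \<epsilon>: "0 \<le> \<epsilon>"
    by (meson norm_ge_zero order_trans)
  have Bd0: "0 \<le> Bd"
    using Bd norm_ge_zero order_trans by blast
  define e where "e = (\<lambda>i. \<eta> (i + j))"
  have e: "e \<in> Xn n" "wnorm n e \<le> Ew n j * wnorm n \<eta>"
    unfolding e_def using shift_Xn[OF \<eta> n] by auto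
  define D where "D = (\<lambda>i. Df (x (i - 1)) - Df (y (i - 1 + j)))"
  define L1 where "L1 = (\<lambda>i. if \<bar>i\<bar> \<le> int K then D i else 0)"
  define L2 where "L2 = (\<lambda>i. if \<bar>i\<bar> \<le> int K then 0 else D i)"
  define w1 where "w1 = (\<lambda>i. blinfun_apply (L1 i) (e (i - 1)))"
  define w2 where "w2 = (\<lambda>i. blinfun_apply (L2 i) (e (i - 1)))"
  have "norm (L1 i) \<le> \<epsilon>" for i
  proof (cases "\<bar>i\<bar> \<le> int K")
    case True
    then have "\<bar>i - 1\<bar> \<le> int K + 1"
      by simp
    then have "norm (Df (x (i - 1)) - Df (y (i - 1 + j))) \<le> \<epsilon>"
      using close by blast
    then show ?thesis
      using True unfolding L1_def D_def by simp
  next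
    case False
    then show ?thesis
      using \<epsilon> unfolding L1_def by simp
  qed
  then have w1: "w1 \<in> Xn n" "wnorm n w1 \<le> \<epsilon> * Ew n 1 * wnorm n e"
    unfolding w1_def using delayed_apply_Xn[OF e(1) n] by blast+
  have "norm (L2 i) \<le> 2 * Bd" for i
  proof -
    have "norm (D i) \<le> norm (Df (x (i - 1))) + norm (Df (y (i - 1 + j)))"
      unfolding D_def by (rule norm_triangle_ineq4)
    also have "\<dots> \<le> 2 * Bd"
      using Bd[rule_format, of "x (i - 1)"] Bd[rule_format, of "y (i - 1 + j)"] by linarith
    finally show ?thesis
      unfolding L2_def using Bd0 by simp
  qed
  then have w2: "w2 \<in> Xn n" "wnorm n w2 \<le> 2 * Bd * Ew n 1 * wnorm n e"
    unfolding w2_def using delayed_apply_Xn[OF e(1) n] by blast+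
  have "(\<lambda>i. Gamma Df y \<eta> (i + j)) = (\<lambda>i. (\<lambda>i. Gamma Df x e i + w1 i) i + w2 i)"
  proof
    fix i
    have w12: "w1 i + w2 i = blinfun_apply (D i) (e (i - 1))"
      unfolding w1_def w2_def L1_def L2_def by simp
    have ij: "i + j - 1 = i - 1 + j"
      by simp
    show "Gamma Df y \<eta> (i + j) = Gamma Df x e i + w1 i + w2 i"
      unfolding add.assoc w12 unfolding Gamma_def D_def e_def ij blinfun.diff_left by simp
  qed
  then have split: "U (\<lambda>i. Gamma Df y \<eta> (i + j)) 0 - \<eta> j = U w1 0 + U w2 0"
    using add[OF Xn_add[OF GX[OF e(1)] w1(1)] w2(1)] add[OF GX[OF e(1)] w1(1)] inv[OF e(1)]
    unfolding e_def by simp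
  have bound1: "norm (U w1 0) \<le> M * (\<epsilon> * Ew n 1 * wnorm n e)"
    using op_at_zero_le[OF U opn w1(1)] w1(2) M by (meson mult_left_mono order_trans)
  have bound2: "norm (U w2 0) \<le> M * M * Bd * Ew n 1 / real K * (2 * Bd * Ew n 1 * wnorm n e)"
  proof -
    have "\<forall>i. \<bar>i\<bar> \<le> int K \<longrightarrow> w2 i = 0"
      unfolding w2_def L2_def by simp
    then have "norm (U w2 0) \<le> M * M * Bd * Ew n 1 / real K * wnorm n w2"
      using inverse_locality[OF ci opn M n K _ w2(1)] Bd by blast
    moreover have "0 \<le> M * M * Bd * Ew n 1 / real K"
      using M Bd0 Ew_pos[of n 1] by simp
    ultimately show ?thesis
      using w2(2) by (meson mult_left_mono order_trans)
  qed
  have "norm (U (\<lambda>i. Gamma Df y \<eta> (i + j)) 0 - \<eta> j) \<le> norm (U w1 0) + norm (U w2 0)"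
    unfolding split by (rule norm_triangle_ineq)
  also have "\<dots> \<le> M * (\<epsilon> * Ew n 1 * wnorm n e) + M * M * Bd * Ew n 1 / real K * (2 * Bd * Ew n 1 * wnorm n e)"
    using bound1 bound2 by (rule add_mono)
  also have "\<dots> = (M * \<epsilon> * Ew n 1 + 2 * M * M * Bd * Bd * (Ew n 1)\<^sup>2 / real K) * wnorm n e"
    by (simp add: field_simps power2_eq_square)
  also have "\<dots> \<le> (M * \<epsilon> * Ew n 1 + 2 * M * M * Bd * Bd * (Ew n 1)\<^sup>2 / real K) * (Ew n j * wnorm n \<eta>)"
    using e(2) M \<epsilon> Bd0 Ew_pos[of n 1] by (intro mult_left_mono) auto
  finally show ?thesis .
qed

lemma derivative_shadowing:
  assumes C1: "C1a_torus_diffeo f Df" and "\<epsilon> > 0"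
  shows "\<exists>\<delta>>0. \<forall>y j z. pseudo_orbit f \<delta> y \<and> tdist z (y j) < \<delta> \<longrightarrow>
           (\<forall>i. \<bar>i\<bar> \<le> int N \<longrightarrow> norm (Df (orbit f z i) - Df (y (i + j))) \<le> \<epsilon>)"
proof -
  obtain \<rho> where \<rho>: "\<rho> > 0" "\<forall>a b. tdist a b < \<rho> \<longrightarrow> norm (Df a - Df b) \<le> \<epsilon>"
    using Df_uniformly_close[OF assms] by blast
  obtain \<delta> where "\<delta> > 0" and \<delta>: "\<forall>y j z. pseudo_orbit f \<delta> y \<and> tdist z (y j) < \<delta> \<longrightarrow>
           (\<forall>i. \<bar>i\<bar> \<le> int N \<longrightarrow> tdist (orbit f z i) (y (j + i)) < \<rho>)"
    using orbit_shadowing[OF C1 \<rho>(1)] by blast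
  have "norm (Df (orbit f z i) - Df (y (i + j))) \<le> \<epsilon>"
    if "pseudo_orbit f \<delta> y" "tdist z (y j) < \<delta>" "\<bar>i\<bar> \<le> int N" for y j z i
  proof -
    have "tdist (orbit f z i) (y (j + i)) < \<rho>"
      using \<delta> that by blast
    then show ?thesis
      using \<rho>(2) by (simp add: add.commute)
  qed
  then show ?thesis
    using \<open>\<delta> > 0\<close> by blast
qed

lemma choose_local_inverses:
  assumes "\<forall>j. \<exists>z\<in>Lstar f Df n m \<Lambda>. tdist (y j) z < \<delta>"
  obtains z Us where "\<And>j. tdist (z j) (y j) < \<delta>"
    and "\<And>j. cont_inverse n (Gamma Df (orbit f (z j))) (Us j) \<and> op_norm n (Us j) \<le> real m"
proof -
  have "\<forall>j. \<exists>z. tdist z (y j) < \<delta> \<and> (\<exists>U. cont_inverse n (Gamma Df (orbit f z)) U \<and> op_norm n U \<le> real m)"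
    using assms tdist_sym unfolding Lstar_def by blast
  then obtain z where "\<And>j. tdist (z j) (y j) < \<delta>"
      and "\<forall>j. \<exists>U. cont_inverse n (Gamma Df (orbit f (z j))) U \<and> op_norm n U \<le> real m"
    by metis
  moreover then obtain Us where
      "\<And>j. cont_inverse n (Gamma Df (orbit f (z j))) (Us j) \<and> op_norm n (Us j) \<le> real m"
    by metis
  ultimately show ?thesis
    using that by blast
qed

definition assembled :: "(int \<Rightarrow> (int \<Rightarrow> real^'d) \<Rightarrow> (int \<Rightarrow> real^'d)) \<Rightarrow> (int \<Rightarrow> real^'d) \<Rightarrow> (int \<Rightarrow> real^'d)"
  where "assembled Us \<xi> j = Us j (\<lambda>i. \<xi> (i + j)) 0"

text \<open>If all local inverses have norm at most \<open>M\<close>, so does the assembled operator: the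
  shift by \<open>j\<close> costs \<open>exp (|j|/n)\<close>, exactly the growth allowed at the \<open>j\<close>-th entry.\<close>
lemma assembled_bounded:
  fixes Us :: "int \<Rightarrow> (int \<Rightarrow> real^'d) \<Rightarrow> (int \<Rightarrow> real^'d)"
  assumes Us: "\<forall>j. bounded_op n (Us j) \<and> op_norm n (Us j) \<le> M" and n: "0 < n" and M: "0 \<le> M"
  shows "bounded_op n (assembled Us)" and "op_norm n (assembled Us) \<le> M"
proof -
  have add: "\<And>j a b. a \<in> Xn n \<Longrightarrow> b \<in> Xn n \<Longrightarrow> Us j (\<lambda>k. a k + b k) = (\<lambda>k. Us j a k + Us j b k)"
    and hom: "\<And>j c a. a \<in> Xn n \<Longrightarrow> Us j (\<lambda>k. c *\<^sub>R a k) = (\<lambda>k. c *\<^sub>R Us j a k)"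
    using Us unfolding bounded_op_def by blast+
  have "norm (assembled Us \<xi> j) \<le> Ew n j * (M * wnorm n \<xi>)" if \<xi>: "\<xi> \<in> Xn n" for \<xi> j
  proof -
    have "norm (assembled Us \<xi> j) \<le> M * wnorm n (\<lambda>i. \<xi> (i + j))"
      unfolding assembled_def using Us op_at_zero_le shift_Xn(1)[OF \<xi> n] by blast
    also have "\<dots> \<le> M * (Ew n j * wnorm n \<xi>)"
      using shift_Xn(2)[OF \<xi> n] M by (rule mult_left_mono)
    finally show ?thesis
      by (simp add: algebra_simps)
  qed
  then have X: "\<And>\<xi>. \<xi> \<in> Xn n \<Longrightarrow> assembled Us \<xi> \<in> Xn n"
    and bound: "\<And>\<xi>. \<xi> \<in> Xn n \<Longrightarrow> wnorm n (assembled Us \<xi>) \<le> M * wnorm n \<xi>"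
    using Xn_wnorm_leI by blast+
  show "bounded_op n (assembled Us)"
    unfolding bounded_op_def
  proof (intro conjI ballI allI)
    fix \<xi> \<zeta> :: "int \<Rightarrow> real^'d" and c :: real
    assume \<xi>: "\<xi> \<in> Xn n"
    then show "assembled Us \<xi> \<in> Xn n"
      by (rule X)
    show "assembled Us (\<lambda>k. c *\<^sub>R \<xi> k) = (\<lambda>k. c *\<^sub>R assembled Us \<xi> k)"
      unfolding assembled_def using hom[OF shift_Xn(1)[OF \<xi> n]] by simp
    assume "\<zeta> \<in> Xn n"
    then show "assembled Us (\<lambda>k. \<xi> k + \<zeta> k) = (\<lambda>k. assembled Us \<xi> k + assembled Us \<zeta> k)"
      unfolding assembled_def using add[OF shift_Xn(1)[OF \<xi> n] shift_Xn(1)[OF \<open>\<zeta> \<in> Xn n\<close> n]]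
      by simp
  qed (use bound in blast)
  show "op_norm n (assembled Us) \<le> M"
  proof (rule op_norm_leI)
    fix \<xi> :: "int \<Rightarrow> real^'d" assume "\<xi> \<in> Xn n" "wnorm n \<xi> \<le> 1"
    then show "wnorm n (assembled Us \<xi>) \<le> M"
      using bound[of \<xi>] mult_left_mono[of "wnorm n \<xi>" 1 M] M by simp
  qed
qed

lemma assembled_residual:
  fixes x :: "int \<Rightarrow> int \<Rightarrow> real^'d" and y :: "int \<Rightarrow> real^'d"
  assumes Us: "\<forall>j. cont_inverse n (Gamma Df (x j)) (Us j) \<and> op_norm n (Us j) \<le> M"
    and M: "0 \<le> M" and n: "0 < n" and K: "0 < K" and Bd: "\<forall>z. norm (Df z) \<le> Bd"
    and close: "\<forall>j i. \<bar>i\<bar> \<le> int K + 1 \<longrightarrow> norm (Df (x j i) - Df (y (i + j))) \<le> \<epsilon>"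
    and coef: "M * \<epsilon> * Ew n 1 + 2 * M * M * Bd * Bd * (Ew n 1)\<^sup>2 / real K \<le> c"
  shows "op_norm n (\<lambda>\<eta> k. assembled Us (Gamma Df y \<eta>) k - \<eta> k) \<le> c"
proof (rule op_norm_leI)
  fix \<eta> :: "int \<Rightarrow> real^'d" assume \<eta>: "\<eta> \<in> Xn n" and "wnorm n \<eta> \<le> 1"
  let ?coef = "M * \<epsilon> * Ew n 1 + 2 * M * M * Bd * Bd * (Ew n 1)\<^sup>2 / real K"
  have "norm (Df (x 0 0) - Df (y (0 + 0))) \<le> \<epsilon>" "norm (Df 0) \<le> Bd"
    using close[rule_format, of 0 0] Bd by simp_all
  then have "0 \<le> \<epsilon>" "0 \<le> Bd"
    by (meson norm_ge_zero order_trans)+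
  then have "0 \<le> ?coef"
    using M Ew_pos[of n 1]
    by (intro add_nonneg_nonneg mult_nonneg_nonneg divide_nonneg_nonneg zero_le_power) auto
  have "norm (assembled Us (Gamma Df y \<eta>) j - \<eta> j) \<le> Ew n j * c" for j
  proof -
    have "norm (assembled Us (Gamma Df y \<eta>) j - \<eta> j) \<le> ?coef * (Ew n j * wnorm n \<eta>)"
      unfolding assembled_def
      using local_inverse_estimate[OF _ _ M n K Bd _ \<eta>] Us close by blast
    also have "\<dots> \<le> c * (Ew n j * 1)"
      using coef \<open>0 \<le> ?coef\<close> \<open>wnorm n \<eta> \<le> 1\<close> Ew_pos[of n j] wnorm_nonneg[OF \<eta>]
      by (intro mult_mono) auto
    finally show ?thesis
      by (simp add: mult.commute)
  qed
  then show "wnorm n (\<lambda>k. assembled Us (Gamma Df y \<eta>) k - \<eta> k) \<le> c"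
    by (rule Xn_wnorm_leI(2))
qed

lemma window_constants:
  fixes M E Bd :: real
  assumes "0 < M" "0 < E"
  shows "\<exists>\<epsilon>>0. \<exists>K>0. M * \<epsilon> * E + 2 * M * M * Bd * Bd * E\<^sup>2 / real K \<le> 1/2"
proof (intro exI conjI)
  define K where "K = nat \<lceil>8 * M * M * Bd * Bd * E\<^sup>2\<rceil> + 1"
  show "0 < 1 / (4 * M * E)" "0 < K"
    using assms unfolding K_def by auto
  have "8 * M * M * Bd * Bd * E\<^sup>2 \<le> real K"
    unfolding K_def by linarith
  then have "2 * M * M * Bd * Bd * E\<^sup>2 / real K \<le> 1/4"
    unfolding K_def by (simp add: field_simps)
  moreover have "M * (1 / (4 * M * E)) * E = 1/4"
    using assms by (simp add: field_simps)
  ultimately show "M * (1 / (4 * M * E)) * E + 2 * M * M * Bd * Bd * E\<^sup>2 / real K \<le> 1/2"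
    by linarith
qed

lemma real_le_mult_dim: "real m \<le> real m * real CARD('d::finite) * sqrt (real CARD('d))"
proof -
  have "1 \<le> real CARD('d)" "1 \<le> sqrt (real CARD('d))"
    by simp_all
  then have "1 \<le> real CARD('d) * sqrt (real CARD('d))"
    by (metis mult_mono' mult_1 zero_le_one)
  then show ?thesis
    using mult_left_mono[of 1 _ "real m"] by (simp add: mult.assoc)
qed

theorem lemma5p3:
  fixes f :: "real^'d \<Rightarrow> real^'d"
    and Df :: "real^'d \<Rightarrow> ((real^'d) \<Rightarrow>\<^sub>L (real^'d))"
    and \<Lambda> :: "(real^'d) set"
    and n m :: nat
  assumes "C1a_torus_diffeo f Df"
    and "torus_set \<Lambda>"
    and "\<forall>x. x \<in> \<Lambda> \<longleftrightarrow> f x \<in> \<Lambda>"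
    and "0 < n"
    and "\<forall>x\<in>\<Lambda>. \<exists>U. cont_inverse n (Gamma Df (orbit f x)) U"
    and "0 < m"
  shows "\<exists>\<delta>>0. \<forall>y. pseudo_orbit f \<delta> y \<and> (\<forall>j. \<exists>z\<in>Lstar f Df n m \<Lambda>. tdist (y j) z < \<delta>) \<longrightarrow>
           (\<exists>\<Theta>. bounded_op n \<Theta> \<and>
              op_norm n (\<lambda>\<eta>. (\<lambda>k. \<Theta> (Gamma Df y \<eta>) k - \<eta> k)) \<le> 1/2 \<and>
              op_norm n \<Theta> \<le> real m * real CARD('d) * sqrt (real CARD('d)))"
proof -
  obtain Bd where Bd: "\<forall>x. norm (Df x) \<le> Bd"
    using Df_bounded[OF assms(1)] by blast
  obtain \<epsilon> K where "\<epsilon> > 0" "K > 0"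
    and coef: "real m * \<epsilon> * Ew n 1 + 2 * real m * real m * Bd * Bd * (Ew n 1)\<^sup>2 / real K \<le> 1/2"
    using window_constants[of "real m" "Ew n 1" Bd] \<open>0 < m\<close> Ew_pos by auto
  obtain \<delta> where "\<delta> > 0" and shadow: "\<forall>y j z. pseudo_orbit f \<delta> y \<and> tdist z (y j) < \<delta> \<longrightarrow>
      (\<forall>i. \<bar>i\<bar> \<le> int (K + 1) \<longrightarrow> norm (Df (orbit f z i) - Df (y (i + j))) \<le> \<epsilon>)"
    using derivative_shadowing[OF assms(1) \<open>\<epsilon> > 0\<close>] by blast
  have "\<exists>\<Theta>. bounded_op n \<Theta> \<and> op_norm n (\<lambda>\<eta>. (\<lambda>k. \<Theta> (Gamma Df y \<eta>) k - \<eta> k)) \<le> 1/2 \<and>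
           op_norm n \<Theta> \<le> real m * real CARD('d) * sqrt (real CARD('d))"
    if y: "pseudo_orbit f \<delta> y" and near: "\<forall>j. \<exists>z\<in>Lstar f Df n m \<Lambda>. tdist (y j) z < \<delta>" for y
  proof -
    obtain z Us where z: "\<And>j. tdist (z j) (y j) < \<delta>"
      and Us: "\<And>j. cont_inverse n (Gamma Df (orbit f (z j))) (Us j) \<and> op_norm n (Us j) \<le> real m"
      using choose_local_inverses[OF near] by blast
    have close: "\<forall>j i. \<bar>i\<bar> \<le> int K + 1 \<longrightarrow> norm (Df (orbit f (z j) i) - Df (y (i + j))) \<le> \<epsilon>"
      using shadow y z by simp
    have "bounded_op n (assembled Us)" "op_norm n (assembled Us) \<le> real m"
      using assembled_bounded[of n Us "real m"] Us assms(4) unfolding cont_inverse_def by auto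
    moreover have "op_norm n (\<lambda>\<eta> k. assembled Us (Gamma Df y \<eta>) k - \<eta> k) \<le> 1/2"
      using assembled_residual[OF _ _ assms(4) \<open>K > 0\<close> Bd close coef] Us by simp
    ultimately show ?thesis
      using real_le_mult_dim[of m, where 'd='d] order_trans by blast
  qed
  then show ?thesis
    using \<open>\<delta> > 0\<close> by blast
qed

end
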